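(* Let $d\ge 3$ and let $G_d$ be the group defined in the context. Then the element $a_1a_2\cdots a_d$ has infinite order in $G_d$.
   Context: Let $d\ge 3$, $X=\{1,\dots,d\}$, $X^*$ the free monoid on $X$, and $T$ the $d$-regular rooted tree with vertex set $X^*$ (root the empty word, $u$ adjacent to $ux$ for $x\in X$). $\mathrm{Aut}(T)$ is the group of root-preserving tree automorphisms, with product written left-to-right: $(gh)(u)=h(g(u))$. For $g\in\mathrm{Aut}(T)$ and $u\in X^*$ the section $g|_u\in\mathrm{Aut}(T)$ is defined by $g(uv)=g(u)\,g|_u(v)$. We write $g=(g|_1,\dots,g|_d)\lambda_g$, where $\lambda_g\in S_d$ is the permutation induced by $g$ on $X$ (so $g(xw)=\lambda_g(x)\,g|_x(w)$), and $e$ is the identity. For $j\in\mathbb{N}$, $\overline{j}\in\{1,\dots,d\}$ denotes the residue with $\overline j\equiv j \pmod d$. The group $G_d\le \mathrm{Aut}(T)$ is generated by $A=\{a_1,\dots,a_d\}$, where for each $i$, $a_i$ acts on the first level as the transposition $(i\ \overline{i+1})$, has sections $a_i|_i=a_i$, $a_i|_{\overline{i+1}}=a_{\overline{i+1}}$, and $a_i|_x=e$ for all other $x\in X$. Explicitly $a_1=(a_1,a_2,e,\dots,e)(1\,2)$, $a_2=(e,a_2,a_3,e,\dots,e)(2\,3)$, …, $a_{d-1}=(e,\dots,e,a_{d-1},a_d)(d-1\ d)$, $a_d=(a_1,e,\dots,e,a_d)(d\ 1)$. *)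

theory Defs
  imports Main
begin

text \<open>Vertices of the d-regular rooted tree T are words over X = {1..d},
  i.e. elements of lists {1..d}. Letters are natural numbers.\<close>

definition rsd :: "nat \<Rightarrow> nat \<Rightarrow> nat" where
  "rsd d j = (if j mod d = 0 then d else j mod d)"

text \<open>Action of the generator a_i of G_d on words, via its wreath recursion:
  a_i = (...) (i  overline(i+1)), with sections a_i|_i = a_i,
  a_i|_(overline(i+1)) = a_(overline(i+1)), and all other sections trivial;
  g(x w) = lambda_g(x) g|_x(w).\<close>

primrec gen_act :: "nat \<Rightarrow> nat \<Rightarrow> nat list \<Rightarrow> nat list" where
  "gen_act d i [] = []"
| "gen_act d i (x # w) =
     (if x = i then rsd d (i + 1) # gen_act d i w
      else if x = rsd d (i + 1) then i # gen_act d (rsd d (i + 1)) w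
      else x # w)"

text \<open>Products are written left-to-right, (gh)(u) = h(g(u)); hence
  a_1 a_2 ... a_d acts by first applying a_1, then a_2, ..., finally a_d.\<close>

definition prod_act :: "nat \<Rightarrow> nat list \<Rightarrow> nat list" where
  "prod_act d u = fold (gen_act d) [1..<d+1] u"

end

theory Submission
  imports Defs
begin

text \<open>Let g = a_1 a_2 ... a_d and h = a_2 a_1 a_d a_(d-1) ... a_3. On the first level, g permutes
  the letters 2, d, d-1, ..., 3 in a single (d-1)-cycle, and the product of its sections along
  this cycle is h; symmetrically, h permutes 1, 2, 4, ..., d in a (d-1)-cycle, and the product of
  its sections along that cycle is g. If f moves the first letter x along a cycle of length s and
  f^n fixes the vertex x w, then s divides n and w is fixed by the (n/s)-th power of the product
  of sections. Hence, by induction on k, both g and h have vertices of level k all of whose return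
  times are divisible by (d-1)^k; as d - 1 \<ge> 2, no power g^n with n \<ge> 1 is trivial.\<close>

definition dvd_return_times :: "nat \<Rightarrow> ('a \<Rightarrow> 'a) \<Rightarrow> 'a \<Rightarrow> bool" where
  "dvd_return_times q f u \<longleftrightarrow> (\<forall>n. (f ^^ n) u = u \<longrightarrow> q dvd n)"

lemma funpow_Cons_cycle:
  assumes "\<And>i v. F (c i # v) = c (Suc i) # T i v"
  shows "(F ^^ n) (c i # v) = c (i + n) # fold T [i..<i + n] v"
  by (induction n) (simp_all add: assms)

lemma fold_mod_upt_mult:
  shows "fold (\<lambda>i. T (i mod s)) [0..<s * m] = fold T [0..<s] ^^ m"
proof (induction m)
  case 0
  then show ?case by simp
next
  case (Suc m)
  have "[s * m..<s * m + s] = map (\<lambda>j. j + s * m) [0..<s]"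
    by (simp add: map_add_upt add.commute)
  then have "fold (\<lambda>i. T (i mod s)) [s * m..<s * m + s] = fold (\<lambda>j. T (j mod s)) [0..<s]"
    by (simp add: fold_map comp_def)
  also have "\<dots> = fold T [0..<s]"
    by (intro ext fold_cong) simp_all
  finally show ?case
    using Suc upt_add_eq_append[of 0 "s * m" s] by (simp add: algebra_simps)
qed

lemma upt_split_at: "i \<le> k \<Longrightarrow> k < j \<Longrightarrow> [i..<j] = [i..<k] @ k # [Suc k..<j]"
  using upt_add_eq_append[of i k "j - k"] upt_conv_Cons[of k j] by simp

lemma dvd_return_times_Cons:
  assumes s: "0 < s" and inj: "inj_on c {..<s}"
    and step: "\<And>i v. i < s \<Longrightarrow> F (c i # v) = c (Suc i mod s) # T i v"
    and ret: "dvd_return_times q (fold T [0..<s]) v"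
  shows "dvd_return_times (s * q) F (c 0 # v)"
  unfolding dvd_return_times_def
proof (intro allI impI)
  fix n assume returns: "(F ^^ n) (c 0 # v) = c 0 # v"
  have "F (c (i mod s) # v) = c (Suc i mod s) # T (i mod s) v" for i v
    using step[of "i mod s" v] s by (simp add: mod_Suc_eq)
  from funpow_Cons_cycle[of F "\<lambda>i. c (i mod s)", OF this, where i = 0]
  have "(F ^^ n) (c 0 # v) = c (n mod s) # fold (\<lambda>i. T (i mod s)) [0..<n] v"
    by simp
  with returns have "c (n mod s) = c 0" and tail: "fold (\<lambda>i. T (i mod s)) [0..<n] v = v"
    by simp_all
  then have "n mod s = 0"
    using inj s by (auto dest: inj_onD)
  then obtain m where n: "n = s * m"
    by auto
  with tail have "(fold T [0..<s] ^^ m) v = v"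
    by (simp add: fold_mod_upt_mult)
  with ret have "q dvd m"
    by (simp add: dvd_return_times_def)
  with n show "s * q dvd n"
    by simp
qed

definition word_act :: "nat \<Rightarrow> nat list \<Rightarrow> nat list \<Rightarrow> nat list" where
  "word_act d ws = fold (gen_act d) ws"

lemma prod_act_eq_word_act: "prod_act d = word_act d [1..<d + 1]"
  by (simp add: prod_act_def word_act_def fun_eq_iff)

lemma fold_word_act: "fold (\<lambda>i. word_act d (W i)) xs = word_act d (concat (map W xs))"
  by (induction xs) (simp_all add: word_act_def)

lemma rsd_Suc [simp]: "2 \<le> d \<Longrightarrow> j \<le> d \<Longrightarrow> rsd d (Suc j) = (if j = d then 1 else Suc j)"
  by (auto simp: rsd_def mod_Suc)

lemma rsd_eq_self [simp]: "0 < j \<Longrightarrow> j \<le> d \<Longrightarrow> rsd d j = j"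
  by (cases "j = d") (auto simp: rsd_def)

lemma fold_gen_act_fixed:
  assumes "2 \<le> d" and "\<forall>j\<in>set js. j \<le> d \<and> x \<noteq> j \<and> x \<noteq> (if j = d then 1 else Suc j)"
  shows "fold (gen_act d) js (x # v) = x # v"
  using assms(2) by (induction js) (auto simp: assms(1))

lemma prod_act_Cons_2:
  assumes "3 \<le> d"
  shows "prod_act d (2 # v) = d # word_act d [2, 1] v"
proof -
  have "[1..<d + 1] = [1, 2] @ [3..<d] @ [d]"
    using assms upt_split_at[of 1 1 "d + 1"] upt_split_at[of 2 2 "d + 1"] upt_split_at[of 3 d "d + 1"]
    by (simp add: numeral_eq_Suc)
  moreover have "fold (gen_act d) [3..<d] (1 # w) = 1 # w" for w
    using assms by (intro fold_gen_act_fixed) auto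
  ultimately show ?thesis
    using assms by (simp add: prod_act_def word_act_def numeral_2_eq_2 del: upt_Suc)
qed

lemma prod_act_Cons:
  assumes "3 \<le> d" "3 \<le> k" "k \<le> d"
  shows "prod_act d (k # v) = (k - 1) # word_act d [k] v"
proof -
  have "[1..<d + 1] = [1..<k - 1] @ (k - 1) # [k..<d + 1]"
    using assms upt_split_at[of 1 "k - 1" "d + 1"] by (simp del: upt_Suc)
  moreover have "fold (gen_act d) [1..<k - 1] (k # v) = k # v"
    using assms by (intro fold_gen_act_fixed) auto
  moreover have "fold (gen_act d) [k..<d + 1] ((k - 1) # w) = (k - 1) # w" for w
    using assms by (intro fold_gen_act_fixed) auto
  ultimately show ?thesis
    using assms by (simp add: prod_act_def word_act_def del: upt_Suc)
qed

definition h_word :: "nat \<Rightarrow> nat list" where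
  "h_word d = 2 # 1 # rev [3..<d + 1]"

lemma h_word_act_Cons_1:
  assumes "3 \<le> d"
  shows "word_act d (h_word d) (1 # v) = 2 # word_act d [1] v"
proof -
  have "fold (gen_act d) (rev [3..<d + 1]) (2 # w) = 2 # w" for w
    using assms by (intro fold_gen_act_fixed) auto
  then show ?thesis
    using assms by (simp add: h_word_def word_act_def numeral_2_eq_2 del: upt_Suc)
qed

lemma h_word_act_Cons_2:
  assumes "3 \<le> d"
  shows "word_act d (h_word d) (2 # v) = (if d = 3 then 1 else 4) # word_act d [2, 3] v"
proof -
  have "rev [3..<d + 1] = rev [4..<d + 1] @ [3]"
    using assms upt_split_at[of 3 3 "d + 1"] by (simp del: upt_Suc)
  moreover have "fold (gen_act d) (rev [4..<d + 1]) (3 # w) = 3 # w" for w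
    using assms by (intro fold_gen_act_fixed) auto
  moreover have "rsd d 4 = (if d = 3 then 1 else 4)"
    using assms rsd_Suc[of d 3] by (simp add: eval_nat_numeral)
  ultimately show ?thesis
    using assms by (simp add: h_word_def word_act_def eval_nat_numeral del: upt_Suc)
qed

lemma h_word_act_Cons:
  assumes "3 \<le> d" "4 \<le> k" "k \<le> d"
  shows "word_act d (h_word d) (k # v) = (if k = d then 1 else Suc k) # word_act d [k] v"
proof -
  have "rev [3..<d + 1] = rev [Suc k..<d + 1] @ k # rev [3..<k]"
    using assms upt_split_at[of 3 k "d + 1"] by (simp del: upt_Suc)
  moreover have "fold (gen_act d) (rev [Suc k..<d + 1]) (k # w) = k # w" for w
    using assms by (intro fold_gen_act_fixed) auto
  moreover have "fold (gen_act d) (rev [3..<k]) ((if k = d then 1 else Suc k) # w)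
      = (if k = d then 1 else Suc k) # w" for w
    using assms by (intro fold_gen_act_fixed) auto
  ultimately show ?thesis
    using assms by (simp add: h_word_def word_act_def del: upt_Suc)
qed

definition prod_cycle :: "nat \<Rightarrow> nat \<Rightarrow> nat" where
  "prod_cycle d i = (if i = 0 then 2 else d + 1 - i)"

definition prod_sections :: "nat \<Rightarrow> nat \<Rightarrow> nat list" where
  "prod_sections d i = (if i = 0 then [2, 1] else [d + 1 - i])"

definition h_cycle :: "nat \<Rightarrow> nat" where
  "h_cycle i = (if i = 0 then 1 else if i = 1 then 2 else i + 2)"

definition h_sections :: "nat \<Rightarrow> nat list" where
  "h_sections i = (if i = 0 then [1] else if i = 1 then [2, 3] else [i + 2])"

lemma inj_on_prod_cycle: "3 \<le> d \<Longrightarrow> inj_on (prod_cycle d) {..<d - 1}"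
  by (auto simp: inj_on_def prod_cycle_def)

lemma inj_on_h_cycle: "inj_on h_cycle {..<d - 1}"
  by (auto simp: inj_on_def h_cycle_def)

lemma prod_act_cycle_step:
  assumes d: "3 \<le> d" and i: "i < d - 1"
  shows "prod_act d (prod_cycle d i # v) = prod_cycle d (Suc i mod (d - 1)) # word_act d (prod_sections d i) v"
proof (cases "i = 0")
  case True
  with d show ?thesis
    by (simp add: prod_act_Cons_2 prod_cycle_def prod_sections_def)
next
  case False
  have "prod_cycle d (Suc i mod (d - 1)) = d - i"
    using d i False by (auto simp: prod_cycle_def mod_Suc)
  with d i False show ?thesis
    by (simp add: prod_act_Cons prod_cycle_def prod_sections_def)
qed

lemma h_word_act_cycle_step:
  assumes d: "3 \<le> d" and i: "i < d - 1"
  shows "word_act d (h_word d) (h_cycle i # v) = h_cycle (Suc i mod (d - 1)) # word_act d (h_sections i) v"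
proof -
  consider "i = 0" | "i = 1" | "2 \<le> i" by linarith
  then show ?thesis
  proof cases
    case 1
    have "d - 1 \<noteq> 1"
      using d by simp
    with 1 show ?thesis
      using h_word_act_Cons_1[OF d] by (simp add: h_cycle_def h_sections_def)
  next
    case 2
    have "h_cycle (Suc i mod (d - 1)) = (if d = 3 then 1 else 4)"
      using d 2 by (auto simp: h_cycle_def mod_Suc)
    with d 2 show ?thesis
      by (simp add: h_word_act_Cons_2 h_cycle_def h_sections_def)
  next
    case 3
    have "h_cycle (Suc i mod (d - 1)) = (if i + 2 = d then 1 else i + 3)"
      using d i 3 by (auto simp: h_cycle_def mod_Suc)
    with d i 3 show ?thesis
      by (simp add: h_word_act_Cons h_cycle_def h_sections_def)
  qed
qed

lemma concat_prod_sections: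
  assumes "3 \<le> d"
  shows "concat (map (prod_sections d) [0..<d - 1]) = h_word d"
proof -
  have "concat (map (prod_sections d) [1..<d - 1]) = concat (map (\<lambda>i. [d + 1 - i]) [1..<d - 1])"
    by (rule arg_cong[where f = concat], rule map_cong) (simp_all add: prod_sections_def)
  also have "\<dots> = rev [3..<d + 1]"
    unfolding concat_map_singleton by (rule nth_equalityI) (auto simp: rev_nth simp del: upt_Suc)
  finally show ?thesis
    using assms upt_conv_Cons[of 0 "d - 1"] by (simp add: prod_sections_def h_word_def del: upt_Suc)
qed

lemma concat_h_sections:
  assumes "3 \<le> d"
  shows "concat (map h_sections [0..<d - 1]) = [1..<d + 1]"
proof -
  have "concat (map h_sections [2..<d - 1]) = concat (map (\<lambda>i. [i + 2]) [2..<d - 1])"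
    by (rule arg_cong[where f = concat], rule map_cong) (simp_all add: h_sections_def)
  also have "\<dots> = [4..<d + 1]"
    unfolding concat_map_singleton by (rule nth_equalityI) (auto simp del: upt_Suc)
  moreover have "[0..<d - 1] = [0, 1] @ [2..<d - 1]"
    using assms by (simp add: upt_conv_Cons numeral_2_eq_2 del: upt_Suc)
  moreover have "[1..<d + 1] = [1, 2, 3] @ [4..<d + 1]"
    using assms by (simp add: upt_conv_Cons eval_nat_numeral del: upt_Suc)
  ultimately show ?thesis
    by (simp add: h_sections_def del: upt_Suc)
qed

lemma dvd_return_times_prod_act:
  assumes d: "3 \<le> d" and ret: "dvd_return_times q (word_act d (h_word d)) v"
  shows "dvd_return_times ((d - 1) * q) (prod_act d) (2 # v)"
proof -
  have "fold (\<lambda>i. word_act d (prod_sections d i)) [0..<d - 1] = word_act d (h_word d)"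
    unfolding fold_word_act concat_prod_sections[OF d] ..
  with d ret have "dvd_return_times ((d - 1) * q) (prod_act d) (prod_cycle d 0 # v)"
    by (intro dvd_return_times_Cons[where T = "\<lambda>i. word_act d (prod_sections d i)"]
        inj_on_prod_cycle prod_act_cycle_step) simp_all
  then show ?thesis
    by (simp add: prod_cycle_def)
qed

lemma dvd_return_times_h_word_act:
  assumes d: "3 \<le> d" and ret: "dvd_return_times q (prod_act d) v"
  shows "dvd_return_times ((d - 1) * q) (word_act d (h_word d)) (1 # v)"
proof -
  have "fold (\<lambda>i. word_act d (h_sections i)) [0..<d - 1] = prod_act d"
    unfolding prod_act_eq_word_act fold_word_act concat_h_sections[OF d] ..
  with d ret have "dvd_return_times ((d - 1) * q) (word_act d (h_word d)) (h_cycle 0 # v)"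
    by (intro dvd_return_times_Cons[where T = "\<lambda>i. word_act d (h_sections i)"]
        inj_on_h_cycle h_word_act_cycle_step) simp_all
  then show ?thesis
    by (simp add: h_cycle_def)
qed

lemma exists_dvd_return_times_pow:
  assumes d: "3 \<le> d"
  shows "(\<exists>u\<in>lists {1..d}. dvd_return_times ((d - 1) ^ k) (prod_act d) u)
    \<and> (\<exists>u\<in>lists {1..d}. dvd_return_times ((d - 1) ^ k) (word_act d (h_word d)) u)"
proof (induction k)
  case 0
  show ?case
    by (auto simp: dvd_return_times_def)
next
  case (Suc k)
  then obtain v w where
    v: "v \<in> lists {1..d}" "dvd_return_times ((d - 1) ^ k) (word_act d (h_word d)) v" and
    w: "w \<in> lists {1..d}" "dvd_return_times ((d - 1) ^ k) (prod_act d) w"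
    by blast
  have "2 # v \<in> lists {1..d}" "1 # w \<in> lists {1..d}"
    using d v(1) w(1) by auto
  with dvd_return_times_prod_act[OF d v(2)] dvd_return_times_h_word_act[OF d w(2)] show ?case
    unfolding power_Suc by blast
qed

theorem lemma3p3:
  fixes d :: nat
  assumes "d \<ge> 3"
  shows "\<forall>n::nat. n \<ge> 1 \<longrightarrow> (\<exists>u \<in> lists {1..d}. (prod_act d ^^ n) u \<noteq> u)"
proof (intro allI impI)
  fix n :: nat
  assume "n \<ge> 1"
  obtain u where u: "u \<in> lists {1..d}" "dvd_return_times ((d - 1) ^ n) (prod_act d) u"
    using exists_dvd_return_times_pow[OF assms] by blast
  have "n < 2 ^ n"
    by simp
  also have "\<dots> \<le> (d - 1) ^ n"
    using assms by (intro power_mono) auto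
  finally have "\<not> (d - 1) ^ n dvd n"
    using \<open>n \<ge> 1\<close> by (auto dest: dvd_imp_le)
  with u show "\<exists>u \<in> lists {1..d}. (prod_act d ^^ n) u \<noteq> u"
    by (auto simp: dvd_return_times_def)
qed

end
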